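(* Let $M,M'\in\mathrm{Mat}(2,\mathbb{Z})$ have the same trace and determinant, and assume $\mathrm{mgcd}(M)=\mathrm{mgcd}(M')$. Then for every integer $n\ge2$, the reductions mod $n$ of $M$ and $M'$ are $\mathrm{Mat}(2,\mathbb{Z}_n)^\times$-conjugate.
   Context: For $M=\begin{pmatrix}a&b\\c&d\end{pmatrix}$, $\mathrm{mgcd}(M)=\gcd(b,c,d-a)\ge0$, equal to $0$ iff $b=c=d-a=0$. $\mathrm{Mat}(2,\mathbb{Z}_n)^\times$ is the group of invertible $2\times2$ matrices over $\mathbb{Z}_n=\mathbb{Z}/n\mathbb{Z}$. *)

theory Defs
  imports "HOL-Analysis.Analysis" "HOL-Number_Theory.Cong"
begin

text \<open>Integer 2x2 matrices are modelled as int^2^2 (rows/columns indexed by 1, 2).\<close>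

definition mgcd :: "int^2^2 \<Rightarrow> int" where
  "mgcd M = gcd (gcd (M$1$2) (M$2$1)) (M$2$2 - M$1$1)"

text \<open>Entrywise congruence mod n: equality of the reductions in Mat(2, Z_n).\<close>
definition mat_cong :: "int \<Rightarrow> int^2^2 \<Rightarrow> int^2^2 \<Rightarrow> bool" where
  "mat_cong n A B \<longleftrightarrow> (\<forall>i j. [A$i$j = B$i$j] (mod n))"

text \<open>Reductions mod n are conjugate by an element of Mat(2,Z_n)^x:
  there are P, Q whose reductions are mutually inverse with P M Q = M' mod n.\<close>
definition conj_mod :: "int \<Rightarrow> int^2^2 \<Rightarrow> int^2^2 \<Rightarrow> bool" where
  "conj_mod n M M' \<longleftrightarrow> (\<exists>P Q :: int^2^2.
      mat_cong n (P ** Q) (mat 1) \<and> mat_cong n (Q ** P) (mat 1) \<and>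
      mat_cong n (P ** M ** Q) M')"

end

theory Submission
  imports Defs "HOL-Computational_Algebra.Primes"
begin

text \<open>Let \<open>g = mgcd M > 0\<close> (otherwise \<open>M\<close> is scalar). Then \<open>M = a I + g N\<close> with
  \<open>N = [[0, \<beta>], [\<gamma>, e]]\<close> and \<open>gcd \<beta> \<gamma> e = 1\<close>. For \<open>v = (x, y)\<close> the matrix
  \<open>P = [v | (h I + N) v]\<close>, \<open>h = a div g\<close>, satisfies \<open>M P = P K\<close> with \<open>K = [[r, *], [g, *]]\<close>,
  \<open>r = a mod g\<close>, and \<open>det P\<close> is the value at \<open>v\<close> of the primitive binary quadratic form
  \<open>\<gamma> x\<^sup>2 + e x y - \<beta> y\<^sup>2\<close>; so \<open>v\<close> can be chosen with \<open>det P\<close> prime to \<open>n\<close>, making \<open>P\<close>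
  invertible mod \<open>n\<close>. Now \<open>K\<close> is determined by \<open>r\<close>, \<open>g\<close>, trace and determinant, and so is
  \<open>r\<close>: \<open>2a = tr M - g e\<close> and \<open>e \<equiv> (tr\<^sup>2 - 4 det) / g\<^sup>2 (mod 2)\<close>. Hence \<open>M\<close> and \<open>M'\<close>
  are conjugate mod \<open>n\<close> to the same \<open>K\<close>.\<close>

lemma primitive_form_represents_coprime:
  fixes A B C n :: int
  assumes "n \<noteq> 0" and "gcd (gcd A B) C = 1"
  shows "\<exists>x y. coprime (A*x^2 + B*x*y + C*y^2) n"
proof -
  define S where "S = prime_factors n"
  \<comment> \<open>each prime factor of \<open>n\<close> divides all but one of the three terms at \<open>(x, y)\<close>\<close>
  define x where "x = \<Prod>{p\<in>S. p dvd A \<and> \<not> p dvd C}"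
  define y where "y = \<Prod>{p\<in>S. \<not> p dvd A}"
  have dvd_prod_primes: "p dvd \<Prod>T \<longleftrightarrow> p \<in> T" if "prime p" "T \<subseteq> S" for p T
  proof -
    have "finite T" "\<And>q. q \<in> T \<Longrightarrow> prime q"
      using that(2) finite_subset unfolding S_def by auto
    then show ?thesis
      using that(1) prime_dvd_prod_iff[of T p id] primes_dvd_imp_eq by auto
  qed
  have "coprime (A*x^2 + B*x*y + C*y^2) n"
  proof (rule ccontr)
    assume "\<not> ?thesis"
    then have "\<not> is_unit (gcd (A*x^2 + B*x*y + C*y^2) n)" "gcd (A*x^2 + B*x*y + C*y^2) n \<noteq> 0"
      using \<open>n \<noteq> 0\<close> by (auto simp: coprime_iff_gcd_eq_1)
    then obtain p where p: "prime p" "p dvd n" and p_dvd: "p dvd A*x^2 + B*x*y + C*y^2"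
      using prime_divisor_exists by (meson dvd_trans gcd_dvd1 gcd_dvd2)
    have "p \<in> S" unfolding S_def using p \<open>n \<noteq> 0\<close> by (simp add: in_prime_factors_iff)
    then have px: "p dvd x \<longleftrightarrow> p dvd A \<and> \<not> p dvd C" and py: "p dvd y \<longleftrightarrow> \<not> p dvd A"
      unfolding x_def y_def by (subst dvd_prod_primes; auto simp: p)+
    consider "\<not> p dvd A" | "p dvd A" "\<not> p dvd C" | "p dvd A" "p dvd C" by blast
    then show False
    proof cases
      case 1
      then have "p dvd A*x^2"
        using p_dvd py by (simp add: power2_eq_square dvd_add_left_iff)
      then show False using 1 px p(1) by (metis prime_dvd_mult_iff prime_dvd_power)
    next
      case 2
      then have "p dvd C*y^2"
        using p_dvd px by (simp add: power2_eq_square dvd_add_right_iff)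
      then show False using 2 py p(1) by (metis prime_dvd_mult_iff prime_dvd_power)
    next
      case 3
      have "\<not> p dvd B"
        using 3 assms(2) p(1) by (metis gcd_greatest not_prime_unit)
      moreover have "p dvd B*x*y" using p_dvd 3
        by (metis add.commute dvd_add_right_iff dvd_mult2)
      ultimately show False using 3 px py p(1) by (metis prime_dvd_mult_iff)
    qed
  qed
  then show ?thesis by blast
qed

definition mat2 :: "int \<Rightarrow> int \<Rightarrow> int \<Rightarrow> int \<Rightarrow> int^2^2" where
  "mat2 a b c d = (\<chi> i j. if i = 1 then (if j = 1 then a else b) else (if j = 1 then c else d))"

lemma mat2_nth [simp]:
  "mat2 a b c d $1$1 = a" "mat2 a b c d $1$2 = b" "mat2 a b c d $2$1 = c" "mat2 a b c d $2$2 = d"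
  by (simp_all add: mat2_def)

lemma mat2_eta: "M = mat2 (M$1$1) (M$1$2) (M$2$1) (M$2$2)"
  by (simp add: vec_eq_iff forall_2)

lemma mat2_mult:
  "mat2 a b c d ** mat2 a' b' c' d' = mat2 (a*a'+b*c') (a*b'+b*d') (c*a'+d*c') (c*b'+d*d')"
  by (simp add: vec_eq_iff forall_2 matrix_matrix_mult_def sum_2)

lemma mat2_one: "mat 1 = mat2 1 0 0 1"
  by (simp add: vec_eq_iff forall_2 mat_def)

lemma det_mat2: "det (mat2 a b c d) = a*d - b*c"
  by (simp add: det_2)

lemma trace_mat2: "trace (mat2 a b c d) = a + d"
  by (simp add: trace_def sum_2)

lemma mgcd_mat2: "mgcd (mat2 a b c d) = gcd (gcd b c) (d - a)"
  by (simp add: mgcd_def)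

lemma mat_cong_mat2:
  "mat_cong n (mat2 a b c d) (mat2 a' b' c' d') \<longleftrightarrow>
     [a = a'] (mod n) \<and> [b = b'] (mod n) \<and> [c = c'] (mod n) \<and> [d = d'] (mod n)"
  by (simp add: mat_cong_def forall_2)

lemma mat2_eq_by_trace_det:
  fixes K L :: "int^2^2"
  assumes "K$1$1 = L$1$1" "K$2$1 = L$2$1" "K$2$1 \<noteq> 0"
    and "trace K = trace L" "det K = det L"
  shows "K = L"
proof -
  obtain a b c d where K: "K = mat2 a b c d" using mat2_eta by blast
  obtain a' b' c' d' where L: "L = mat2 a' b' c' d'" using mat2_eta by blast
  have "a = a'" "c = c'" "c \<noteq> 0" "a + d = a' + d'" "a*d - b*c = a'*d' - b'*c'"
    using assms unfolding K L trace_mat2 det_mat2 by simp_all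
  then have "d = d'" "b*c = b'*c" by simp_all
  then show ?thesis using K L \<open>a = a'\<close> \<open>c = c'\<close> \<open>c \<noteq> 0\<close> by simp
qed

lemma mgcd_eq_0_imp_eq:
  assumes "trace M = trace M'" "mgcd M = 0" "mgcd M' = 0"
  shows "M = M'"
proof -
  obtain a b c d where M: "M = mat2 a b c d" using mat2_eta by blast
  obtain a' b' c' d' where M': "M' = mat2 a' b' c' d'" using mat2_eta by blast
  have "b = 0" "c = 0" "d = a" "b' = 0" "c' = 0" "d' = a'" "a + d = a' + d'"
    using assms unfolding M M' mgcd_mat2 trace_mat2 by auto
  then show ?thesis unfolding M M' by simp
qed

lemma mat_cong_refl: "mat_cong n A A"
  by (simp add: mat_cong_def)

lemma mat_cong_sym: "mat_cong n A B \<Longrightarrow> mat_cong n B A"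
  by (simp add: mat_cong_def cong_sym)

lemma mat_cong_trans [trans]: "mat_cong n A B \<Longrightarrow> mat_cong n B C \<Longrightarrow> mat_cong n A C"
  unfolding mat_cong_def using cong_trans by blast

lemma mat_cong_mult: "mat_cong n A B \<Longrightarrow> mat_cong n C D \<Longrightarrow> mat_cong n (A ** C) (B ** D)"
  unfolding mat_cong_def matrix_matrix_mult_def by (auto intro!: cong_sum cong_mult)

lemma conj_mod_refl: "conj_mod n M M"
  unfolding conj_mod_def by (intro exI[of _ "mat 1"]) (simp add: mat_cong_refl)

lemma conj_mod_sym:
  assumes "conj_mod n M M'"
  shows "conj_mod n M' M"
proof -
  obtain P Q where PQ: "mat_cong n (P ** Q) (mat 1)" "mat_cong n (Q ** P) (mat 1)"
    and conj: "mat_cong n (P ** M ** Q) M'"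
    using assms unfolding conj_mod_def by blast
  have "mat_cong n (Q ** M' ** P) (Q ** (P ** M ** Q) ** P)"
    by (intro mat_cong_mult mat_cong_refl mat_cong_sym[OF conj])
  also have "Q ** (P ** M ** Q) ** P = (Q ** P) ** M ** (Q ** P)"
    by (simp add: matrix_mul_assoc)
  also have "mat_cong n \<dots> (mat 1 ** M ** mat 1)"
    by (intro mat_cong_mult mat_cong_refl PQ)
  finally show ?thesis
    unfolding conj_mod_def using PQ by auto
qed

lemma conj_mod_trans:
  assumes "conj_mod n M M'" "conj_mod n M' M''"
  shows "conj_mod n M M''"
proof -
  obtain P Q where PQ: "mat_cong n (P ** Q) (mat 1)" "mat_cong n (Q ** P) (mat 1)"
    and conj: "mat_cong n (P ** M ** Q) M'"
    using assms(1) unfolding conj_mod_def by blast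
  obtain P' Q' where PQ': "mat_cong n (P' ** Q') (mat 1)" "mat_cong n (Q' ** P') (mat 1)"
    and conj': "mat_cong n (P' ** M' ** Q') M''"
    using assms(2) unfolding conj_mod_def by blast
  have "(P' ** P) ** (Q ** Q') = P' ** (P ** Q) ** Q'"
    by (simp add: matrix_mul_assoc)
  also have "mat_cong n \<dots> (P' ** mat 1 ** Q')"
    by (intro mat_cong_mult mat_cong_refl PQ)
  also have "mat_cong n \<dots> (mat 1)"
    using PQ' by simp
  finally have inv1: "mat_cong n ((P' ** P) ** (Q ** Q')) (mat 1)" .
  have "(Q ** Q') ** (P' ** P) = Q ** (Q' ** P') ** P"
    by (simp add: matrix_mul_assoc)
  also have "mat_cong n \<dots> (Q ** mat 1 ** P)"
    by (intro mat_cong_mult mat_cong_refl PQ')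
  also have "mat_cong n \<dots> (mat 1)"
    using PQ by simp
  finally have inv2: "mat_cong n ((Q ** Q') ** (P' ** P)) (mat 1)" .
  have "(P' ** P) ** M ** (Q ** Q') = P' ** (P ** M ** Q) ** Q'"
    by (simp add: matrix_mul_assoc)
  also have "mat_cong n \<dots> (P' ** M' ** Q')"
    by (intro mat_cong_mult mat_cong_refl conj)
  also note conj'
  finally show ?thesis
    unfolding conj_mod_def using inv1 inv2 by blast
qed

lemma mat_cong_inverse_if_coprime_det:
  assumes "coprime (det P) n"
  shows "\<exists>Q. mat_cong n (P ** Q) (mat 1) \<and> mat_cong n (Q ** P) (mat 1)"
proof -
  obtain a b c d where P: "P = mat2 a b c d" using mat2_eta by blast
  obtain u where u: "[(a*d - b*c) * u = 1] (mod n)"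
    using assms cong_solve_coprime_int unfolding P det_mat2 by blast
  define Q where "Q = mat2 (u*d) (-u*b) (-u*c) (u*a)"
  have "P ** Q = mat2 ((a*d - b*c)*u) 0 0 ((a*d - b*c)*u)"
    "Q ** P = mat2 ((a*d - b*c)*u) 0 0 ((a*d - b*c)*u)"
    unfolding P Q_def mat2_mult by (simp_all add: algebra_simps)
  then have "mat_cong n (P ** Q) (mat 1)" "mat_cong n (Q ** P) (mat 1)"
    using u by (simp_all add: mat2_one mat_cong_mat2)
  then show ?thesis by blast
qed

lemma conj_mod_if_intertwined:
  assumes "M ** P = P ** K" and "coprime (det P) n"
  shows "conj_mod n M K"
proof -
  obtain Q where PQ: "mat_cong n (P ** Q) (mat 1)" "mat_cong n (Q ** P) (mat 1)"
    using mat_cong_inverse_if_coprime_det[OF assms(2)] by blast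
  have "Q ** M ** P = (Q ** P) ** K"
    by (simp add: matrix_mul_assoc[symmetric] assms(1))
  also have "mat_cong n \<dots> (mat 1 ** K)"
    by (intro mat_cong_mult mat_cong_refl PQ)
  finally show ?thesis
    unfolding conj_mod_def using PQ by auto
qed

lemma mgcd_normal_form:
  fixes M :: "int^2^2" and n :: int
  assumes "mgcd M \<noteq> 0" and "n \<noteq> 0"
  obtains P K where "coprime (det P) n" "M ** P = P ** K"
    "K$1$1 = M$1$1 mod mgcd M" "K$2$1 = mgcd M" "trace K = trace M" "det K = det M"
proof -
  obtain a b c d where M: "M = mat2 a b c d" using mat2_eta by blast
  define g where "g = mgcd M"
  have g: "g = gcd (gcd b c) (d - a)" unfolding g_def M mgcd_mat2 ..
  define r where "r = a mod g"
  define h where "h = a div g"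
  obtain \<beta> where \<beta>: "b = g*\<beta>" using g by (metis dvdE gcd_dvd1 dvd_trans)
  obtain \<gamma> where \<gamma>: "c = g*\<gamma>" using g by (metis dvdE gcd_dvd1 gcd_dvd2 dvd_trans)
  obtain e where e: "d - a = g*e" using g by (metis dvdE gcd_dvd2)
  have a: "a = r + g*h" unfolding r_def h_def by simp
  have d: "d = r + g*h + g*e" using a e by simp
  have "g > 0" using assms(1) g g_def by (simp add: order_le_neq_trans)
  moreover have "g = g * gcd (gcd \<beta> \<gamma>) e"
    using g \<open>g > 0\<close> unfolding \<beta> \<gamma> e by (simp add: gcd_mult_left abs_mult)
  ultimately have "gcd (gcd \<beta> \<gamma>) e = 1" by simp
  then have primitive: "gcd (gcd \<gamma> e) (-\<beta>) = 1" by (metis gcd.assoc gcd.commute gcd_neg2)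
  obtain x y where xy: "coprime (\<gamma>*x^2 + e*x*y + (-\<beta>)*y^2) n"
    using primitive_form_represents_coprime[OF assms(2) primitive] by blast
  define t where "t = 2*h + e"
  define D where "D = h*(h+e) - \<beta>*\<gamma>"
  define P where "P = mat2 x (h*x + \<beta>*y) y (\<gamma>*x + (h+e)*y)"
  define K where "K = mat2 r (-g*D) g (r + g*t)"
  have "det P = \<gamma>*x^2 + e*x*y + (-\<beta>)*y^2"
    unfolding P_def det_mat2 by (simp add: algebra_simps power2_eq_square)
  with xy have "coprime (det P) n" by simp
  moreover have "M ** P = P ** K"
    unfolding M P_def K_def mat2_mult a d \<beta> \<gamma> t_def D_def by (simp add: algebra_simps)
  moreover have "K$1$1 = M$1$1 mod mgcd M" "K$2$1 = mgcd M"
    unfolding K_def r_def g_def by (simp_all add: M)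
  moreover have "trace K = trace M" "det K = det M"
    unfolding M K_def trace_mat2 det_mat2 a d \<beta> \<gamma> t_def D_def
    by (simp_all add: algebra_simps power2_eq_square)
  ultimately show thesis by (rule that)
qed

lemma mgcd_residue_invariant:
  fixes M M' :: "int^2^2"
  assumes "trace M = trace M'" "det M = det M'" "mgcd M = mgcd M'" "mgcd M \<noteq> 0"
  shows "M$1$1 mod mgcd M = M'$1$1 mod mgcd M"
proof -
  obtain a b c d where M: "M = mat2 a b c d" using mat2_eta by blast
  obtain a' b' c' d' where M': "M' = mat2 a' b' c' d'" using mat2_eta by blast
  define g where "g = mgcd M"
  have g: "g = gcd (gcd b c) (d - a)" "g = gcd (gcd b' c') (d' - a')"
    using assms(3) unfolding g_def M M' mgcd_mat2 by simp_all
  obtain \<beta> where \<beta>: "b = g*\<beta>" using g by (metis dvdE gcd_dvd1 dvd_trans)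
  obtain \<gamma> where \<gamma>: "c = g*\<gamma>" using g by (metis dvdE gcd_dvd1 gcd_dvd2 dvd_trans)
  obtain e where e: "d = a + g*e" using g by (metis dvdE gcd_dvd2 diff_add_cancel add.commute)
  obtain \<beta>' where \<beta>': "b' = g*\<beta>'" using g by (metis dvdE gcd_dvd1 dvd_trans)
  obtain \<gamma>' where \<gamma>': "c' = g*\<gamma>'" using g by (metis dvdE gcd_dvd1 gcd_dvd2 dvd_trans)
  obtain e' where e': "d' = a' + g*e'" using g by (metis dvdE gcd_dvd2 diff_add_cancel add.commute)
  have tr: "2*a + g*e = 2*a' + g*e'"
    using assms(1) unfolding M M' trace_mat2 e e' by simp
  have "(a+d)^2 - 4*(a*d - b*c) = (a'+d')^2 - 4*(a'*d' - b'*c')"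
    using assms(1,2) unfolding M M' trace_mat2 det_mat2 by simp
  then have "g^2 * (e^2 + 4*\<beta>*\<gamma>) = g^2 * (e'^2 + 4*\<beta>'*\<gamma>')"
    unfolding \<beta> \<gamma> e \<beta>' \<gamma>' e' by (simp add: algebra_simps power2_eq_square)
  then have disc: "e^2 + 4*\<beta>*\<gamma> = e'^2 + 4*\<beta>'*\<gamma>'"
    using assms(4) g_def by simp
  have "even e \<longleftrightarrow> even (e^2 + 4*\<beta>*\<gamma>)" by simp
  also have "\<dots> \<longleftrightarrow> even e'" unfolding disc by simp
  finally have "even (e' - e)" by simp
  then obtain m where "e' - e = 2*m" by (rule evenE)
  then have "a - a' = g*m" using tr by (simp add: algebra_simps)
  then have "a mod g = a' mod g" by (metis mod_eq_dvd_iff dvd_triv_left)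
  then show ?thesis using M M' g_def by simp
qed

theorem proposition39:
  fixes M M' :: "int^2^2" and n :: int
  assumes "trace M = trace M'"
    and "det M = det M'"
    and "mgcd M = mgcd M'"
    and "n \<ge> 2"
  shows "conj_mod n M M'"
proof (cases "mgcd M = 0")
  case True
  then have "M = M'" using assms(1,3) by (intro mgcd_eq_0_imp_eq) simp_all
  then show ?thesis by (simp add: conj_mod_refl)
next
  case False
  have "n \<noteq> 0" using assms(4) by simp
  obtain P K where K: "coprime (det P) n" "M ** P = P ** K"
    "K$1$1 = M$1$1 mod mgcd M" "K$2$1 = mgcd M" "trace K = trace M" "det K = det M"
    using mgcd_normal_form[OF False \<open>n \<noteq> 0\<close>] by blast
  obtain P' K' where K': "coprime (det P') n" "M' ** P' = P' ** K'"
    "K'$1$1 = M'$1$1 mod mgcd M'" "K'$2$1 = mgcd M'" "trace K' = trace M'" "det K' = det M'"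
    using mgcd_normal_form[of M' n] False assms(3) \<open>n \<noteq> 0\<close> by auto
  have "K = K'"
    using K(3-6) K'(3-6) False assms(1-3) mgcd_residue_invariant[OF assms(1-3) False]
    by (intro mat2_eq_by_trace_det) simp_all
  then have "conj_mod n K M'"
    using conj_mod_sym[OF conj_mod_if_intertwined[OF K'(2,1)]] by simp
  then show ?thesis
    using conj_mod_trans[OF conj_mod_if_intertwined[OF K(2,1)]] by blast
qed

end
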